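(* Let $a\in\mathbb{C}$ with $0<|a|<1$, $M\in\mathbb{N}$ (a positive integer), and $\varphi(z)=az^M$. Define $\nu=\left\lfloor\frac{2-|a|}{1-|a|}\right\rfloor$ and $\mathcal{N}_M=\max\{1,\,M(\nu-1)|a|^{\nu-1}\}$. Then the operator norm of $D_\varphi$ acting on the Hilbert space $S^2$ is $\|D_\varphi\|=\mathcal{N}_M$.
   Context: $\mathbb{D}$ is the open unit disk. $S^2$ is the Hilbert space of analytic functions $f(z)=\sum_{n\ge0}a_nz^n$ on $\mathbb{D}$ with $\|f\|_{S^2}^2=|a_0|^2+\sum_{n\ge1}n^2|a_n|^2<\infty$ (equivalently $\|f\|_{S^2}^2=|f(0)|^2+\|f'\|_{H^2}^2$). $D_\varphi f=f'\circ\varphi$. *)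

theory Defs
  imports "HOL-Analysis.Analysis"
begin

definition taylor_coeff :: "(complex \<Rightarrow> complex) \<Rightarrow> nat \<Rightarrow> complex" where
  "taylor_coeff f n = (deriv ^^ n) f 0 / of_nat (fact n)"

definition in_S2 :: "(complex \<Rightarrow> complex) \<Rightarrow> bool" where
  "in_S2 f \<longleftrightarrow> f holomorphic_on ball 0 1 \<and>
     summable (\<lambda>n. (real n)^2 * (norm (taylor_coeff f n))^2)"

text \<open>The S^2 norm: ||f||^2 = |a_0|^2 + sum_{n>=1} n^2 |a_n|^2
  (the n = 0 term of the series vanishes).\<close>
definition S2_norm :: "(complex \<Rightarrow> complex) \<Rightarrow> real" where
  "S2_norm f = sqrt ((norm (f 0))^2 + (\<Sum>n. (real n)^2 * (norm (taylor_coeff f n))^2))"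

definition D_comp :: "(complex \<Rightarrow> complex) \<Rightarrow> (complex \<Rightarrow> complex) \<Rightarrow> (complex \<Rightarrow> complex)" where
  "D_comp \<phi> f = (\<lambda>z. deriv f (\<phi> z))"

definition S2_opnorm :: "((complex \<Rightarrow> complex) \<Rightarrow> (complex \<Rightarrow> complex)) \<Rightarrow> real" where
  "S2_opnorm T = Sup {S2_norm (T f) | f. in_S2 f \<and> S2_norm f \<le> 1}"

end

theory Submission imports Defs "HOL-Complex_Analysis.Complex_Analysis" begin

text \<open>Writing \<open>f(z) = \<Sum> a\<^sub>n z\<^sup>n\<close>, the function \<open>D\<^sub>\<phi> f = f' \<circ> \<phi>\<close> with \<open>\<phi>(z) = a z\<^sup>M\<close> has the
  Taylor series \<open>\<Sum> (n+1) a\<^sub>n\<^sub>+\<^sub>1 a\<^sup>n z\<^sup>M\<^sup>n\<close>. Hence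
  \<open>\<parallel>D\<^sub>\<phi> f\<parallel>\<^sup>2 = \<Sum> w\<^sub>n (n+1)\<^sup>2 \<bar>a\<^sub>n\<^sub>+\<^sub>1\<bar>\<^sup>2\<close> with \<open>w\<^sub>0 = 1\<close> and \<open>w\<^sub>n = (M n \<bar>a\<bar>\<^sup>n)\<^sup>2\<close>, while
  \<open>\<parallel>f\<parallel>\<^sup>2 = \<bar>a\<^sub>0\<bar>\<^sup>2 + \<Sum> (n+1)\<^sup>2 \<bar>a\<^sub>n\<^sub>+\<^sub>1\<bar>\<^sup>2\<close>. So \<open>D\<^sub>\<phi>\<close> acts diagonally and its norm is
  \<open>sup\<^sub>n \<surd>w\<^sub>n\<close>, attained at a monomial. The sequence \<open>n \<bar>a\<bar>\<^sup>n\<close> increases as long as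
  \<open>n \<le> \<bar>a\<bar>/(1-\<bar>a\<bar>)\<close> and decreases afterwards, so its maximum is at \<open>n = \<nu> - 1\<close>.\<close>

lemma taylor_coeff_deriv:
  "taylor_coeff (deriv f) n = of_nat (Suc n) * taylor_coeff f (Suc n)"
proof -
  have "(deriv ^^ Suc n) f = (deriv ^^ n) (deriv f)"
    by (simp only: funpow_Suc_right o_def)
  moreover have "(of_nat (fact (Suc n)) :: complex) = of_nat (Suc n) * of_nat (fact n)"
    by (simp only: fact_Suc of_nat_mult) simp
  ultimately show ?thesis
    unfolding taylor_coeff_def by (simp del: of_nat_Suc fact_Suc)
qed

lemma taylor_coeff_eqI:
  assumes "0 < r" and "\<And>z. z \<in> ball 0 r \<Longrightarrow> (\<lambda>j. b j * z^j) sums g z"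
  shows "taylor_coeff g j = b j"
proof -
  have "summable (\<lambda>j. b j * complex_of_real (r/2)^j)"
    using assms by (auto simp: sums_iff)
  hence "conv_radius b \<ge> norm (complex_of_real (r/2))"
    by (rule conv_radius_geI)
  hence "fps_conv_radius (Abs_fps b) > 0"
    unfolding fps_conv_radius_def fps_nth_Abs_fps
    by (rule order_less_le_trans[rotated]) (use \<open>0 < r\<close> in simp)
  moreover have "eventually (\<lambda>z. z \<in> ball (0::complex) r) (nhds 0)"
    using \<open>0 < r\<close> by (intro eventually_nhds_in_open) auto
  hence "eventually (\<lambda>z. eval_fps (Abs_fps b) z = g z) (nhds 0)"
    by eventually_elim (use assms in \<open>auto simp: eval_fps_def sums_iff\<close>)
  ultimately have "g has_fps_expansion Abs_fps b"
    by (simp add: has_fps_expansion_def)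
  from fps_nth_fps_expansion[OF this, of j] show ?thesis
    by (simp add: taylor_coeff_def)
qed

lemma taylor_coeff_sums:
  assumes "f holomorphic_on ball 0 r" and "z \<in> ball 0 r"
  shows "(\<lambda>n. taylor_coeff f n * z^n) sums f z"
  using holomorphic_power_series[OF assms] by (simp add: taylor_coeff_def)

lemma monomial_in_ball:
  fixes a z :: complex
  assumes "norm a \<le> 1" and "M \<ge> 1" and "z \<in> ball 0 1"
  shows "a * z^M \<in> ball 0 1"
proof -
  have "norm z ^ M < 1"
    using assms by (simp add: power_less_one_iff)
  moreover have "norm a * norm z ^ M \<le> norm z ^ M"
    using assms by (simp add: mult_left_le_one_le)
  ultimately show ?thesis
    by (simp add: norm_mult norm_power)
qed

lemma taylor_coeff_comp_monomial:
  fixes a :: complex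
  assumes h: "h holomorphic_on ball 0 1" and a: "norm a \<le> 1" and M: "M \<ge> 1"
  shows "taylor_coeff (\<lambda>z. h (a * z^M)) j =
     (if M dvd j then a^(j div M) * taylor_coeff h (j div M) else 0)"
proof (rule taylor_coeff_eqI[of 1])
  fix z :: complex assume z: "z \<in> ball 0 1"
  let ?c = "\<lambda>j. (if M dvd j then a^(j div M) * taylor_coeff h (j div M) else 0) * z^j"
  have "?c (M * n) = taylor_coeff h n * (a * z^M)^n" for n
    using M by (simp add: power_mult_distrib power_mult)
  hence "(\<lambda>n. ?c (M * n)) sums h (a * z^M)"
    using taylor_coeff_sums[OF h monomial_in_ball[OF a M z]] by simp
  moreover have "strict_mono (\<lambda>n. M * n)"
    using M by (auto simp: strict_mono_def)
  ultimately show "?c sums h (a * z^M)"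
    by (subst (asm) sums_mono_reindex) (auto simp: dvd_def)
qed simp

definition deriv_coeff_sq :: "(complex \<Rightarrow> complex) \<Rightarrow> nat \<Rightarrow> real" where
  "deriv_coeff_sq f n = (norm (taylor_coeff (deriv f) n))^2"

lemma deriv_coeff_sq_nonneg: "deriv_coeff_sq f n \<ge> 0"
  by (simp add: deriv_coeff_sq_def)

lemma deriv_coeff_sq_eq: "deriv_coeff_sq f n = (real (Suc n))^2 * (norm (taylor_coeff f (Suc n)))^2"
  by (simp add: deriv_coeff_sq_def taylor_coeff_deriv norm_mult power_mult_distrib del: of_nat_Suc)

lemma in_S2_iff_summable_deriv_coeff_sq:
  "in_S2 f \<longleftrightarrow> f holomorphic_on ball 0 1 \<and> summable (deriv_coeff_sq f)"
  unfolding in_S2_def deriv_coeff_sq_eq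
  by (subst summable_Suc_iff[symmetric]) simp

lemma S2_norm_sq:
  assumes "in_S2 f"
  shows "(S2_norm f)^2 = (norm (f 0))^2 + (\<Sum>n. deriv_coeff_sq f n)"
proof -
  let ?g = "\<lambda>n. (real n)^2 * (norm (taylor_coeff f n))^2"
  have "summable ?g"
    using assms by (simp add: in_S2_def)
  hence "suminf ?g = (\<Sum>n. deriv_coeff_sq f n)"
    unfolding deriv_coeff_sq_eq by (subst suminf_split_head) auto
  moreover have "0 \<le> suminf ?g"
    using \<open>summable ?g\<close> by (intro suminf_nonneg) auto
  ultimately show ?thesis
    unfolding S2_norm_def by simp
qed

lemma S2_norm_nonneg: "in_S2 f \<Longrightarrow> S2_norm f \<ge> 0"
  unfolding S2_norm_def in_S2_def by (auto intro!: add_nonneg_nonneg suminf_nonneg)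

text \<open>At \<open>n = 0\<close> the coefficient \<open>f'(0)\<close> becomes the constant term of \<open>D\<^sub>\<phi> f\<close>, which the
  \<open>S\<^sup>2\<close> norm counts with weight \<open>1\<close> rather than \<open>0\<^sup>2\<close>.\<close>

definition D_weight :: "complex \<Rightarrow> nat \<Rightarrow> nat \<Rightarrow> real" where
  "D_weight a M n = (if n = 0 then 1 else (real M * real n * norm a ^ n)^2)"

lemma D_weight_nonneg: "D_weight a M n \<ge> 0"
  by (simp add: D_weight_def)

lemma taylor_coeff_D_comp_monomial:
  assumes "f holomorphic_on ball 0 1" and "norm a \<le> 1" and "M \<ge> 1"
  shows "taylor_coeff (D_comp (\<lambda>z. a * z^M) f) j =
     (if M dvd j then a^(j div M) * taylor_coeff (deriv f) (j div M) else 0)"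
  unfolding D_comp_def
  by (intro taylor_coeff_comp_monomial holomorphic_deriv assms) auto

lemma S2_norm_D_comp_monomial:
  assumes f: "f holomorphic_on ball 0 1" and a: "norm a \<le> 1" and M: "M \<ge> 1"
    and S: "(\<lambda>n. D_weight a M n * deriv_coeff_sq f n) sums S"
  shows "in_S2 (D_comp (\<lambda>z. a * z^M) f) \<and> (S2_norm (D_comp (\<lambda>z. a * z^M) f))^2 = S"
proof -
  let ?T = "D_comp (\<lambda>z. a * z^M) f"
  let ?d0 = "deriv_coeff_sq f 0"
  define g where "g j = (real j)^2 * (norm (taylor_coeff ?T j))^2" for j
  have g_nonneg: "0 \<le> g j" for j
    by (simp add: g_def)
  have "taylor_coeff ?T (M * n) = a^n * taylor_coeff (deriv f) n" for n
    using M by (simp add: taylor_coeff_D_comp_monomial[OF f a M])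
  hence "g (M * n) = D_weight a M n * deriv_coeff_sq f n - (if n = 0 then ?d0 else 0)" for n
    by (cases "n = 0") (simp_all add: g_def D_weight_def deriv_coeff_sq_def norm_mult
        norm_power power_mult_distrib)
  hence "(\<lambda>n. g (M * n)) sums (S - ?d0)"
    using sums_diff[OF S sums_single[of 0 "\<lambda>_. ?d0"]] by simp
  moreover have "strict_mono (\<lambda>n. M * n)"
    using M by (auto simp: strict_mono_def)
  moreover have "g j = 0" if "j \<notin> range (\<lambda>n. M * n)" for j
    using that by (auto simp: g_def taylor_coeff_D_comp_monomial[OF f a M] dvd_def)
  ultimately have g: "g sums (S - ?d0)"
    by (subst (asm) sums_mono_reindex)
  have "(deriv f \<circ> (\<lambda>z. a * z^M)) holomorphic_on ball 0 1"
    by (rule holomorphic_on_compose_gen[OF _ holomorphic_deriv[OF f]])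
       (auto intro!: holomorphic_intros monomial_in_ball a M)
  hence "?T holomorphic_on ball 0 1"
    by (simp add: D_comp_def o_def)
  with g have "in_S2 ?T"
    unfolding in_S2_def g_def[abs_def] by (auto simp: sums_iff)
  have T0: "(norm (?T 0))^2 = ?d0"
    using M by (simp add: D_comp_def deriv_coeff_sq_def taylor_coeff_def power_0_left)
  have "0 \<le> suminf g"
    using g by (intro suminf_nonneg g_nonneg) (simp add: sums_iff)
  hence "(S2_norm ?T)^2 = (norm (?T 0))^2 + suminf g"
    unfolding S2_norm_def g_def[abs_def] by (intro real_sqrt_pow2 add_nonneg_nonneg) simp_all
  with \<open>in_S2 ?T\<close> g T0 show ?thesis
    by (simp add: sums_iff)
qed

lemma summable_weighted_deriv_coeff_sq:
  assumes "in_S2 f" and "\<And>n. 0 \<le> w n" and "\<And>n. w n \<le> B"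
  shows "summable (\<lambda>n. w n * deriv_coeff_sq f n)"
proof (rule summable_comparison_test[where g = "\<lambda>n. B * deriv_coeff_sq f n"])
  show "summable (\<lambda>n. B * deriv_coeff_sq f n)"
    using assms(1) by (intro summable_mult) (simp add: in_S2_iff_summable_deriv_coeff_sq)
  show "\<exists>N. \<forall>n\<ge>N. norm (w n * deriv_coeff_sq f n) \<le> B * deriv_coeff_sq f n"
    using assms(2,3) deriv_coeff_sq_nonneg by (auto intro!: mult_right_mono)
qed

lemma S2_norm_D_comp_monomial_le:
  assumes f: "in_S2 f" and a: "norm a \<le> 1" and M: "M \<ge> 1"
    and C: "0 \<le> C" "\<And>n. D_weight a M n \<le> C^2"
  shows "in_S2 (D_comp (\<lambda>z. a * z^M) f)
     \<and> S2_norm (D_comp (\<lambda>z. a * z^M) f) \<le> C * S2_norm f"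
proof -
  let ?T = "D_comp (\<lambda>z. a * z^M) f"
  have hf: "f holomorphic_on ball 0 1" and sd: "summable (deriv_coeff_sq f)"
    using f by (auto simp: in_S2_iff_summable_deriv_coeff_sq)
  have sw: "summable (\<lambda>n. D_weight a M n * deriv_coeff_sq f n)"
    using summable_weighted_deriv_coeff_sq[OF f D_weight_nonneg C(2)] .
  note T = S2_norm_D_comp_monomial[OF hf a M summable_sums[OF sw]]
  have "(S2_norm ?T)^2 = (\<Sum>n. D_weight a M n * deriv_coeff_sq f n)"
    using T by (simp add: sums_iff)
  also have "\<dots> \<le> (\<Sum>n. C^2 * deriv_coeff_sq f n)"
    using sw summable_mult[OF sd] by (rule suminf_le[rotated])
       (rule mult_right_mono[OF C(2) deriv_coeff_sq_nonneg])
  also have "\<dots> = C^2 * (\<Sum>n. deriv_coeff_sq f n)"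
    using sd by (rule suminf_mult)
  also have "\<dots> \<le> C^2 * (S2_norm f)^2"
    using S2_norm_sq[OF f] by (intro mult_left_mono) auto
  finally have "(S2_norm ?T)^2 \<le> (C * S2_norm f)^2"
    by (simp add: power_mult_distrib)
  hence "S2_norm ?T \<le> C * S2_norm f"
    by (rule power2_le_imp_le) (use C(1) S2_norm_nonneg[OF f] in simp)
  with T show ?thesis
    by blast
qed

definition S2_monomial :: "nat \<Rightarrow> complex \<Rightarrow> complex" where
  "S2_monomial k = (\<lambda>z. z^(Suc k) / of_nat (Suc k))"

lemma taylor_coeff_S2_monomial:
  "taylor_coeff (S2_monomial k) j = (if j = Suc k then 1 / of_nat (Suc k) else 0)"
proof (rule taylor_coeff_eqI[of 1])
  fix z :: complex
  have "(\<lambda>j. (if j = Suc k then 1 / of_nat (Suc k) else 0) * z^j) =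
        (\<lambda>j. if j = Suc k then z^j / of_nat (Suc k) else 0)"
    by auto
  thus "(\<lambda>j. (if j = Suc k then 1 / of_nat (Suc k) else 0) * z^j) sums S2_monomial k z"
    using sums_single[of "Suc k" "\<lambda>j. z^j / of_nat (Suc k)"] by (simp add: S2_monomial_def)
qed simp

lemma deriv_coeff_sq_S2_monomial:
  "deriv_coeff_sq (S2_monomial k) = (\<lambda>n. if n = k then 1 else 0)"
  by (rule ext)
     (simp add: deriv_coeff_sq_eq taylor_coeff_S2_monomial norm_divide power_divide del: of_nat_Suc)

lemma S2_monomial_unit:
  "in_S2 (S2_monomial k) \<and> S2_norm (S2_monomial k) = 1"
proof -
  have "S2_monomial k holomorphic_on ball 0 1"
    unfolding S2_monomial_def by (intro holomorphic_intros) auto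
  moreover have sums: "deriv_coeff_sq (S2_monomial k) sums 1"
    unfolding deriv_coeff_sq_S2_monomial using sums_single[of k "\<lambda>_. 1::real"] by simp
  ultimately have "in_S2 (S2_monomial k)"
    by (auto simp: in_S2_iff_summable_deriv_coeff_sq sums_iff)
  moreover have "(S2_norm (S2_monomial k))^2 = 1"
    using S2_norm_sq[OF \<open>in_S2 (S2_monomial k)\<close>] sums by (simp add: S2_monomial_def sums_iff)
  ultimately show ?thesis
    using S2_norm_nonneg[of "S2_monomial k"] by (auto simp: power2_eq_1_iff)
qed

lemma S2_norm_D_comp_S2_monomial:
  assumes "norm a \<le> 1" and "M \<ge> 1"
  shows "S2_norm (D_comp (\<lambda>z. a * z^M) (S2_monomial k)) = sqrt (D_weight a M k)"
proof -
  have "(\<lambda>n. D_weight a M n * deriv_coeff_sq (S2_monomial k) n) sums D_weight a M k"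
    unfolding deriv_coeff_sq_S2_monomial using sums_single[of k "D_weight a M"]
    by (simp add: if_distrib cong: if_cong)
  from S2_norm_D_comp_monomial[OF _ assms this] S2_monomial_unit[of k]
  show ?thesis
    by (auto simp: in_S2_def intro!: real_sqrt_unique[symmetric] S2_norm_nonneg)
qed

lemma S2_opnorm_D_comp_monomial:
  assumes a: "norm a \<le> 1" and M: "M \<ge> 1"
    and C: "0 \<le> C" "\<And>n. D_weight a M n \<le> C^2" and k: "D_weight a M k = C^2"
  shows "(\<forall>f. in_S2 f \<longrightarrow> in_S2 (D_comp (\<lambda>z. a * z ^ M) f))
     \<and> bdd_above {S2_norm (D_comp (\<lambda>z. a * z ^ M) f) | f. in_S2 f \<and> S2_norm f \<le> 1}
     \<and> S2_opnorm (D_comp (\<lambda>z. a * z ^ M)) = C"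
proof -
  define S where "S = {S2_norm (D_comp (\<lambda>z. a * z ^ M) f) | f. in_S2 f \<and> S2_norm f \<le> 1}"
  note bound = S2_norm_D_comp_monomial_le[OF _ a M C]
  have le: "y \<le> C" if "y \<in> S" for y
  proof -
    from that obtain f where f: "in_S2 f" "S2_norm f \<le> 1"
      and y: "y = S2_norm (D_comp (\<lambda>z. a * z ^ M) f)"
      unfolding S_def by auto
    have "y \<le> C * S2_norm f"
      using bound[OF f(1)] y by simp
    also have "\<dots> \<le> C"
      using f(2) C(1) by (simp add: mult_left_le)
    finally show ?thesis .
  qed
  have "C \<in> S"
    using S2_norm_D_comp_S2_monomial[OF a M, of k] S2_monomial_unit[of k] k C(1)
    unfolding S_def by force
  hence "S2_opnorm (D_comp (\<lambda>z. a * z ^ M)) = C"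
    unfolding S2_opnorm_def S_def[symmetric] by (rule cSup_eq_maximum) (use le in auto)
  thus ?thesis
    using bound le unfolding S_def[symmetric] bdd_above_def by blast
qed

lemma mult_power_le_at_peak:
  fixes r :: real and k n :: nat
  assumes r: "0 \<le> r" "r < 1"
    and k1: "real k - 1 \<le> r / (1 - r)" and k2: "r / (1 - r) < real k"
  shows "real n * r^n \<le> real k * r^k"
proof -
  have up: "real m * r^m \<le> real (Suc m) * r^(Suc m)" if "m < k" for m
  proof -
    have "real m \<le> r / (1 - r)" using that k1 by linarith
    hence "real m * (1 - r) \<le> r" using r by (simp add: field_simps)
    hence "real m \<le> real (Suc m) * r" by (simp add: algebra_simps)
    hence "real m * r^m \<le> (real (Suc m) * r) * r^m" using r by (intro mult_right_mono) auto
    thus ?thesis by (simp add: mult_ac)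
  qed
  have down: "real (Suc m) * r^(Suc m) \<le> real m * r^m" if "k \<le> m" for m
  proof -
    have "r / (1 - r) < real m" using that k2 by linarith
    hence "r < real m * (1 - r)" using r by (simp add: field_simps)
    hence "real (Suc m) * r \<le> real m" by (simp add: algebra_simps)
    hence "(real (Suc m) * r) * r^m \<le> real m * r^m" using r by (intro mult_right_mono) auto
    thus ?thesis by (simp add: mult_ac)
  qed
  show ?thesis
  proof (cases "n \<le> k")
    case True
    show ?thesis using True
    proof (induction k rule: dec_induct)
      case base then show ?case by simp
    next
      case (step m) then show ?case using up[of m] by linarith
    qed
  next
    case False
    hence "k \<le> n" by simp
    thus ?thesis
    proof (induction n rule: dec_induct)
      case base then show ?case by simp
    next
      case (step m) then show ?case using down[of m] by linarith
    qed
  qed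
qed

lemma D_weight_le_peak:
  assumes "norm a < 1"
    and "real k - 1 \<le> norm a / (1 - norm a)" and "norm a / (1 - norm a) < real k"
  shows "D_weight a M n \<le> (max 1 (real M * real k * norm a ^ k))^2"
proof (cases "n = 0")
  case False
  have "real n * norm a ^ n \<le> real k * norm a ^ k"
    using mult_power_le_at_peak[OF norm_ge_zero assms] .
  hence "real M * real n * norm a ^ n \<le> max 1 (real M * real k * norm a ^ k)"
    by (simp add: mult.assoc mult_left_mono le_max_iff_disj)
  thus ?thesis
    using False by (simp add: D_weight_def power_mono)
qed (simp add: D_weight_def)

lemma D_weight_attains_max:
  assumes "k \<ge> 1"
  shows "\<exists>n. D_weight a M n = (max 1 (real M * real k * norm a ^ k))^2"
proof (cases "real M * real k * norm a ^ k \<le> 1")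
  case True
  thus ?thesis by (intro exI[of _ 0]) (simp add: D_weight_def max_def)
next
  case False
  thus ?thesis using assms by (intro exI[of _ k]) (simp add: D_weight_def max_def)
qed

lemma peak_index_floor:
  fixes r :: real
  assumes "0 \<le> r" and "r < 1"
  defines "k \<equiv> \<lfloor>(2 - r) / (1 - r)\<rfloor> - 1"
  shows "1 \<le> k" and "real_of_int k - 1 \<le> r / (1 - r)" and "r / (1 - r) < real_of_int k"
proof -
  have "(2 - r) / (1 - r) = r / (1 - r) + 2"
    using assms by (simp add: field_simps)
  moreover have "0 \<le> r / (1 - r)"
    using assms by simp
  ultimately show "1 \<le> k" "real_of_int k - 1 \<le> r / (1 - r)" "r / (1 - r) < real_of_int k"
    unfolding k_def using floor_correct[of "r / (1 - r) + 2"] by linarith+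
qed

theorem theorem5p1:
  fixes a :: complex and M :: nat
  assumes "0 < norm a" and "norm a < 1" and "M \<ge> 1"
  defines "\<nu> \<equiv> \<lfloor>(2 - norm a) / (1 - norm a)\<rfloor>"
  defines "N \<equiv> max 1 (real M * real_of_int (\<nu> - 1) * norm a ^ nat (\<nu> - 1))"
  shows "(\<forall>f. in_S2 f \<longrightarrow> in_S2 (D_comp (\<lambda>z. a * z ^ M) f))
     \<and> bdd_above {S2_norm (D_comp (\<lambda>z. a * z ^ M) f) | f. in_S2 f \<and> S2_norm f \<le> 1}
     \<and> S2_opnorm (D_comp (\<lambda>z. a * z ^ M)) = N"
proof -
  define k where "k = nat (\<nu> - 1)"
  note peak = peak_index_floor[of "norm a", folded \<nu>_def]
  have k: "k \<ge> 1" "real k - 1 \<le> norm a / (1 - norm a)" "norm a / (1 - norm a) < real k"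
    and N: "N = max 1 (real M * real k * norm a ^ k)"
    using peak assms(2) by (simp_all add: k_def N_def)
  obtain n where "D_weight a M n = N^2"
    using D_weight_attains_max[OF k(1)] N by blast
  moreover have "D_weight a M m \<le> N^2" for m
    unfolding N using D_weight_le_peak[OF assms(2) k(2,3)] .
  ultimately show ?thesis
    using S2_opnorm_D_comp_monomial[of a M N] assms(2,3) N by simp
qed

end
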